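(* Let $\Omega\subset\mathbb{R}^3$ be a non-empty, open and convex set, $\rho\in L_2(\Omega;\mathbb{R}^+)$ (extended by zero outside $\Omega$), $P\in\mathbb{R}^{3\times 3}$ a constant (homogeneous) receive coil sensitivity, $\theta\in[0,\pi)$, $G\neq 0$ a gradient strength, $A_1,A_2\in\mathbb{R}$ amplitudes and $\Lambda_1,\Lambda_2\colon\mathbb{R}\to\mathbb{R}$ sinusoidal functions. Put $\bm{e}_\theta=(\cos\theta,\sin\theta,0)^T$, $\bm{e}_\theta^\perp=(-\sin\theta,\cos\theta,0)^T$, $\bm{e}_z=(0,0,1)^T$, and consider the magnetic field $$\bm{H}^\theta(\bm{x},t)=\bigl(A_1\Lambda_1(t)-G\langle\bm{x},\bm{e}_\theta^\perp\rangle\bigr)\bm{e}_\theta^\perp+\bigl(-A_2\Lambda_2(t)+G\langle \bm{x},\bm{e}_z\rangle\bigr)\bm{e}_z,$$ which vanishes on a line parallel to $\bm{e}_\theta$ (the field-free line, FFL). Let the induced signal be $$\bm{s}^\theta(t)=-\mu_0 m P\frac{d}{dt}\int_{\mathbb{R}^3}\rho(\bm{x})\,\mathcal{L}\Bigl(\frac{\lVert\bm{H}^\theta(\bm{x},t)\rVert}{H_{\mathrm{sat}}}\Bigr)\frac{\bm{H}^\theta(\bm{x},t)}{\lVert\bm{H}^\theta(\bm{x},t)\rVert}\,d\bm{x},$$ with constants $\mu_0,m,H_{\mathrm{sat}}>0$, and set $h=H_{\mathrm{sat}}/G$. Let $\mathbf{L}_\theta=\langle\bm{e}_\theta\rangle^\perp$,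 described in the rotated coordinates $(\eta,\xi,z)$ (where $\bm{x}=\eta\bm{e}_\theta+\xi\bm{e}_\theta^\perp+z\bm{e}_z$) as the set of points $\bm{y}=(0,\xi,z)$, and let $X_\theta[\rho](\xi,z)=\int_{\mathbb{R}}\rho(\eta\bm{e}_\theta+\xi\bm{e}_\theta^\perp+z\bm{e}_z)\,d\eta$ be the X-ray projection of $\rho$ in direction $\bm{e}_\theta$. Let $\bm{r}(t)=\bigl(0,\,A_1\Lambda_1(t)/G,\,A_2\Lambda_2(t)/G\bigr)^T$ (in the rotated coordinates) be the trajectory of the intersection point of the FFL with $\mathbf{L}_\theta$ and $\bm{v}(t)=\frac{d}{dt}\bm{r}(t)$. Then $$\bm{s}^\theta(t)=-\mu_0 m P E_\theta\, A_{h,\theta}\bigl[X_\theta[\rho]\bigr]\bigl(\bm{r}(t)\bigr)\,\bm{v}(t),\qquad E_\theta=\begin{pmatrix}\cos\theta&-\sin\theta&0\\ \sin\theta&\cos\theta&0\\0&0&-1\end{pmatrix},$$ where for a function $q$ on $\mathbf{L}_\theta$ and $\bm{r}\in\mathbf{L}_\theta$, $$A_{h,\theta}[q](\bm{r})=\int_{\mathbf{L}_\theta} q(\bm{y})\,\nabla_{\bm{r}}\Bigl(\mathcal{L}\Bigl(\frac{\lVert\bm{r}-\bm{y}\rVert}{h}\Bigr)\frac{\bm{r}-\bm{y}}{\lVert\bm{r}-\bm{y}\rVert}\Bigr)\,d\bm{y}$$ (the MPI Core Operator on the plane $\mathbf{L}_\theta$; the gradient is taken with respect to $\bm{r}$ within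 $\mathbf{L}_\theta$, and the resulting $2\times 2$ matrix acts on the in-plane components $(v_2,v_3)$ of $\bm{v}(t)$, the result being regarded as a vector $(0,\cdot,\cdot)^T\in\mathbb{R}^3$).
   Context: $\mathcal{L}(x)=\coth(x)-1/x$ is the Langevin function (with $\mathcal{L}(0)=0$). $\langle\cdot,\cdot\rangle$ is the standard scalar product. The signal model corresponds to Langevin magnetization $\bm{M}=m\rho\,\mathcal{L}(\lVert\bm{H}\rVert/H_{\mathrm{sat}})\bm{H}/\lVert\bm{H}\rVert$ and Faraday's law with constant coil sensitivity $P$. *)

theory Defs
  imports "HOL-Analysis.Analysis"
begin

definition langevin :: "real \<Rightarrow> real" where
  "langevin x = (if x = 0 then 0 else cosh x / sinh x - 1 / x)"

text \<open>Sinusoidal function (unit amplitude; amplitudes are separate parameters).\<close>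
definition sinusoidal :: "(real \<Rightarrow> real) \<Rightarrow> bool" where
  "sinusoidal f \<longleftrightarrow> (\<exists>\<omega> \<phi>. \<forall>t. f t = sin (\<omega> * t + \<phi>))"

definition e_theta :: "real \<Rightarrow> real^3" where
  "e_theta \<theta> = vector [cos \<theta>, sin \<theta>, 0]"

definition e_theta_perp :: "real \<Rightarrow> real^3" where
  "e_theta_perp \<theta> = vector [- sin \<theta>, cos \<theta>, 0]"

definition e_z :: "real^3" where
  "e_z = vector [0, 0, 1]"

definition H_ffl :: "real \<Rightarrow> real \<Rightarrow> real \<Rightarrow> (real \<Rightarrow> real) \<Rightarrow> (real \<Rightarrow> real)
    \<Rightarrow> real \<Rightarrow> real^3 \<Rightarrow> real \<Rightarrow> real^3" where
  "H_ffl \<theta> A1 A2 \<Lambda>1 \<Lambda>2 G x t =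
     (A1 * \<Lambda>1 t - G * (x \<bullet> e_theta_perp \<theta>)) *\<^sub>R e_theta_perp \<theta>
   + (- A2 * \<Lambda>2 t + G * (x \<bullet> e_z)) *\<^sub>R e_z"

definition langevin_field :: "real \<Rightarrow> 'a::real_normed_vector \<Rightarrow> 'a" where
  "langevin_field c u = langevin (norm u / c) *\<^sub>R sgn u"

text \<open>Signal s^theta(t) = - mu0 m P d/dt (integral), given as derivative of the
  magnetization integral; here the integral itself (mean magnetization integral).\<close>
definition magn_integral :: "(real^3 \<Rightarrow> real) \<Rightarrow> real \<Rightarrow> real \<Rightarrow> real \<Rightarrow> (real \<Rightarrow> real)
    \<Rightarrow> (real \<Rightarrow> real) \<Rightarrow> real \<Rightarrow> real \<Rightarrow> real \<Rightarrow> real^3" where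
  "magn_integral \<rho> \<theta> A1 A2 \<Lambda>1 \<Lambda>2 G Hsat t =
     (LINT x|lborel. \<rho> x *\<^sub>R langevin_field Hsat (H_ffl \<theta> A1 A2 \<Lambda>1 \<Lambda>2 G x t))"

text \<open>X-ray projection in direction e_theta; the plane L_theta is parametrised by
  (xi, z) = (p$1, p$2) in real^2.\<close>
definition xray :: "real \<Rightarrow> (real^3 \<Rightarrow> real) \<Rightarrow> real^2 \<Rightarrow> real" where
  "xray \<theta> \<rho> p = (LINT \<eta>|lborel. \<rho> (\<eta> *\<^sub>R e_theta \<theta> + (p$1) *\<^sub>R e_theta_perp \<theta> + (p$2) *\<^sub>R e_z))"

definition core_op :: "real \<Rightarrow> (real^2 \<Rightarrow> real) \<Rightarrow> real^2 \<Rightarrow> real^2^2" where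
  "core_op h q r =
     (LINT y|lborel. q y *\<^sub>R matrix (frechet_derivative (\<lambda>r'. langevin_field h (r' - y)) (at r)))"

definition E_rot :: "real \<Rightarrow> real^3^3" where
  "E_rot \<theta> = vector [vector [cos \<theta>, - sin \<theta>, 0],
                     vector [sin \<theta>, cos \<theta>, 0],
                     vector [0, 0, -1]]"

definition embed_plane :: "real^2 \<Rightarrow> real^3" where
  "embed_plane w = vector [0, w$1, w$2]"

definition ffl_traj :: "real \<Rightarrow> real \<Rightarrow> (real \<Rightarrow> real) \<Rightarrow> (real \<Rightarrow> real) \<Rightarrow> real \<Rightarrow> real \<Rightarrow> real^2" where
  "ffl_traj A1 A2 \<Lambda>1 \<Lambda>2 G t = vector [A1 * \<Lambda>1 t / G, A2 * \<Lambda>2 t / G]"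

end

theory Submission
  imports Defs "HOL-Real_Asymp.Real_Asymp"
begin

(*
  In the coordinates x = eta e_theta + xi e_theta_perp + z e_z, which preserve Lebesgue measure,
  the field is H(x, t) = G E_theta (r(t) - y) with y = (xi, z); it does not depend on eta.  The
  Langevin field L_c(v) = L(|v|/c) v/|v| satisfies L_Hsat(G v) = L_h(v) for h = Hsat/G and commutes
  with the isometry E_theta, so Fubini turns the magnetisation integral into E_theta applied to the
  planar convolution (X_theta rho * L_h)(r(t)).  L_h is bounded and has a bounded derivative, so
  dominated convergence differentiates the convolution under the integral sign; its Jacobian at r(t)
  is the core operator A_h[X_theta rho](r(t)), and the chain rule along r(t) gives the signal.
*)

lemma x_le_sinh: "0 \<le> x \<Longrightarrow> x \<le> sinh (x::real)"
  using real_le_x_sinh[of x] by (simp add: sinh_field_def exp_minus)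

lemma sinh_le_x_cosh:
  fixes x :: real
  assumes "0 \<le> x"
  shows "sinh x \<le> x * cosh x"
proof -
  have d: "DERIV (\<lambda>y. y * cosh y - sinh y) y :> y * sinh y" for y :: real
    by (auto intro!: derivative_eq_intros)
  have "(\<lambda>y. y * cosh y - sinh y) 0 \<le> (\<lambda>y. y * cosh y - sinh y) x"
    by (rule DERIV_nonneg_imp_nondecreasing[OF assms], rule exI, rule conjI, rule d) auto
  then show ?thesis by simp
qed

lemma x_cosh_minus_sinh_le:
  fixes x :: real
  assumes "0 \<le> x"
  shows "x * cosh x - sinh x \<le> x\<^sup>2 * sinh x"
proof -
  have d: "DERIV (\<lambda>y. y\<^sup>2 * sinh y - y * cosh y + sinh y) y :> y * sinh y + y\<^sup>2 * cosh y"
    for y :: real by (auto intro!: derivative_eq_intros simp: algebra_simps power2_eq_square)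
  have "(\<lambda>y. y\<^sup>2 * sinh y - y * cosh y + sinh y) 0 \<le> (\<lambda>y. y\<^sup>2 * sinh y - y * cosh y + sinh y) x"
    by (rule DERIV_nonneg_imp_nondecreasing[OF assms], rule exI, rule conjI, rule d) auto
  then show ?thesis by simp
qed

lemma langevin_0 [simp]: "langevin 0 = 0"
  by (simp add: langevin_def)

lemma langevin_minus: "langevin (- x) = - langevin x"
  by (simp add: langevin_def)

lemma langevin_pos_bounds:
  assumes "0 < x"
  shows "0 \<le> langevin x" "langevin x \<le> x" "langevin x \<le> 1"
proof -
  have s: "0 < sinh x" using assms by simp
  have "x * exp (- x) \<le> x" using assms by simp
  also have "x \<le> sinh x" using x_le_sinh assms by simp
  finally have "x * (cosh x - sinh x) \<le> sinh x" by (simp add: cosh_minus_sinh)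
  with s assms show "langevin x \<le> 1" by (simp add: langevin_def field_simps)
  show "0 \<le> langevin x" using sinh_le_x_cosh[of x] s assms by (simp add: langevin_def field_simps)
  show "langevin x \<le> x" using x_cosh_minus_sinh_le[of x] s assms
    by (simp add: langevin_def field_simps power2_eq_square)
qed

lemma abs_langevin_le: "\<bar>langevin x\<bar> \<le> \<bar>x\<bar>" "\<bar>langevin x\<bar> \<le> 1"
  using langevin_pos_bounds[of x] langevin_pos_bounds[of "- x"]
  by (cases x "0::real" rule: linorder_cases; simp add: langevin_minus)+

(* The derivative of langevin away from 0; at 0 the formula gives the junk value 0 instead of 1/3. *)
definition langevin' :: "real \<Rightarrow> real" where
  "langevin' x = 1 / x\<^sup>2 - 1 / (sinh x)\<^sup>2"

lemma abs_langevin'_le: "\<bar>langevin' x\<bar> \<le> 1"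
proof (cases "x = 0")
  case False
  define a where "a = \<bar>x\<bar>"
  have a: "0 < a" "0 < sinh a" using False by (simp_all add: a_def)
  have "a\<^sup>2 \<le> (sinh a)\<^sup>2"
    using x_le_sinh[of a] a by (intro power_mono) simp_all
  then have lower: "0 \<le> 1 / a\<^sup>2 - 1 / (sinh a)\<^sup>2"
    using a by (simp add: frac_le)
  have "(sinh a)\<^sup>2 \<le> (a * cosh a)\<^sup>2"
    using sinh_le_x_cosh[of a] a by (intro power_mono) simp_all
  then have "(sinh a)\<^sup>2 - a\<^sup>2 \<le> a\<^sup>2 * (sinh a)\<^sup>2"
    by (simp add: power_mult_distrib cosh_square_eq algebra_simps)
  then have upper: "1 / a\<^sup>2 - 1 / (sinh a)\<^sup>2 \<le> 1"
    using a by (simp add: field_simps)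
  have "langevin' x = 1 / a\<^sup>2 - 1 / (sinh a)\<^sup>2"
    by (simp add: langevin'_def a_def)
  with lower upper show ?thesis by simp
qed (simp add: langevin'_def)

lemma langevin_has_real_derivative:
  assumes "x \<noteq> 0"
  shows "(langevin has_real_derivative langevin' x) (at x)"
proof (rule has_field_derivative_transform_within_open[of "\<lambda>y. cosh y / sinh y - 1 / y" _ _ "- {0}"])
  have "cosh x * cosh x = sinh x * sinh x + 1"
    using cosh_square_eq[of x] by (simp add: power2_eq_square)
  then show "((\<lambda>y. cosh y / sinh y - 1 / y) has_real_derivative langevin' x) (at x)"
    using assms by (auto intro!: derivative_eq_intros simp: langevin'_def field_simps power2_eq_square)
qed (use assms in \<open>auto simp: langevin_def\<close>)

lemma langevin_over_x_tendsto: "((\<lambda>x. langevin x / x) \<longlongrightarrow> 1/3) (at 0)"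
proof (rule Lim_transform_eventually)
  show "((\<lambda>x::real. (cosh x / sinh x - 1/x) / x) \<longlongrightarrow> 1/3) (at 0)"
    unfolding cosh_field_def sinh_field_def by real_asymp
  show "\<forall>\<^sub>F x in at 0. (cosh x / sinh x - 1/x) / x = langevin x / x"
    by (simp add: eventually_at_filter langevin_def)
qed

lemma langevin_field_eq_scaleR: "langevin_field 1 v = (langevin (norm v) / norm v) *\<^sub>R v"
  by (simp add: langevin_field_def sgn_div_norm divide_inverse_commute)

lemma langevin_field_eq_unit: "langevin_field c v = langevin_field 1 (v /\<^sub>R c)"
proof (cases c "0::real" rule: linorder_cases)
  case less
  then show ?thesis
    by (simp add: langevin_field_def sgn_scaleR langevin_minus divide_inverse_commute)
qed (simp_all add: langevin_field_def sgn_scaleR divide_inverse_commute)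

lemma langevin_field_scaleR: "langevin_field c (a *\<^sub>R v) = langevin_field (c / a) v"
proof -
  have "inverse c * a = inverse (c / a)"
    by (simp add: divide_inverse mult.commute)
  then show ?thesis
    by (metis langevin_field_eq_unit scaleR_scaleR)
qed

lemma langevin_field_isometry:
  assumes "linear f" "\<And>v. norm (f v) = norm v"
  shows "langevin_field c (f v) = f (langevin_field c v)"
  using assms by (simp add: langevin_field_def sgn_div_norm linear.scaleR)

lemma norm_langevin_field_le: "norm (langevin_field c v) \<le> 1"
  using abs_langevin_le(2)[of "norm v / c"]
  by (cases "v = 0") (simp_all add: langevin_field_def norm_sgn)

(* Derivative of langevin_field 1: L'(|u|) in the radial direction sgn u, L(|u|)/|u| across it,
   and (1/3) id at the origin since L(s)/s tends to 1/3. *)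
definition langevin_field_deriv :: "'a::real_inner \<Rightarrow> 'a \<Rightarrow> 'a" where
  "langevin_field_deriv u w = (if u = 0 then w /\<^sub>R 3 else
     ((langevin' (norm u) - langevin (norm u) / norm u) * (w \<bullet> sgn u)) *\<^sub>R sgn u
     + (langevin (norm u) / norm u) *\<^sub>R w)"

lemma langevin_field_unit_has_derivative:
  fixes u :: "'a::real_inner"
  shows "(langevin_field 1 has_derivative langevin_field_deriv u) (at u)"
proof (cases "u = 0")
  case False
  define s where "s = norm u"
  have s: "0 < s" using False by (simp add: s_def)
  have "((\<lambda>s. langevin s / s) has_real_derivative (langevin' s - langevin s / s) / s) (at s)"
    using DERIV_divide[OF langevin_has_real_derivative DERIV_ident, of s] s
    by (simp add: field_simps power2_eq_square)
  then have "((\<lambda>v. langevin (norm v) / norm v) has_derivative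
      (\<lambda>w. (langevin' s - langevin s / s) / s * (w \<bullet> sgn u))) (at u)"
    unfolding s_def has_field_derivative_def
    by (rule has_derivative_compose[OF has_derivative_norm[OF False], unfolded o_def])
  from has_derivative_scaleR[OF this has_derivative_ident]
  have "((\<lambda>v. (langevin (norm v) / norm v) *\<^sub>R v) has_derivative (\<lambda>w.
      ((langevin' s - langevin s / s) / s * (w \<bullet> sgn u)) *\<^sub>R u + (langevin s / s) *\<^sub>R w)) (at u)"
    by (simp add: s_def add.commute)
  moreover have "(x / s) *\<^sub>R u = x *\<^sub>R sgn u" for x
    by (simp add: s_def sgn_div_norm divide_inverse_commute)
  ultimately show ?thesis
    using False by (simp add: langevin_field_eq_scaleR[abs_def] langevin_field_deriv_def[abs_def] s_def[symmetric])
next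
  case True
  have "filterlim (\<lambda>y::'a. norm y) (at 0) (at 0)"
    by (rule filterlim_atI) (auto intro!: tendsto_eq_intros simp: eventually_at_filter)
  from filterlim_compose[OF langevin_over_x_tendsto this]
  have "((\<lambda>y::'a. \<bar>langevin (norm y) / norm y - 1/3\<bar>) \<longlongrightarrow> 0) (at 0)"
    using tendsto_rabs[OF tendsto_diff[OF _ tendsto_const[of "1/3"]]] by fastforce
  moreover have "\<bar>langevin (norm y) / norm y - 1/3\<bar>
      = norm (langevin_field 1 y - langevin_field 1 0 - y /\<^sub>R 3) / norm (y - 0)" if "y \<noteq> 0" for y :: 'a
    using that by (simp add: langevin_field_eq_scaleR algebra_simps flip: scaleR_diff_left)
  then have "\<forall>\<^sub>F y in at (0::'a). \<bar>langevin (norm y) / norm y - 1/3\<bar>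
      = norm (langevin_field 1 y - langevin_field 1 0 - y /\<^sub>R 3) / norm (y - 0)"
    by (simp add: eventually_at_filter)
  ultimately have "((\<lambda>y::'a. norm (langevin_field 1 y - langevin_field 1 0 - y /\<^sub>R 3) / norm (y - 0))
      \<longlongrightarrow> 0) (at 0)"
    by (rule Lim_transform_eventually)
  then show ?thesis
    using True by (simp add: has_derivative_iff_norm langevin_field_deriv_def[abs_def] bounded_linear_scaleR_right)
qed

lemma norm_langevin_field_deriv_le: "norm (langevin_field_deriv u w) \<le> 3 * norm w"
proof (cases "u = 0")
  case False
  define s where "s = norm u"
  have s: "0 < s" using False by (simp add: s_def)
  have ratio: "\<bar>langevin s / s\<bar> \<le> 1"
    using abs_langevin_le(1)[of s] s by (simp add: abs_div)
  have "\<bar>langevin' s - langevin s / s\<bar> \<le> 2"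
    using abs_langevin'_le[of s] ratio by linarith
  moreover have "\<bar>w \<bullet> sgn u\<bar> \<le> norm w"
    using Cauchy_Schwarz_ineq2[of w "sgn u"] False by (simp add: norm_sgn)
  ultimately have "\<bar>(langevin' s - langevin s / s) * (w \<bullet> sgn u)\<bar> \<le> 2 * norm w"
    unfolding abs_mult by (rule mult_mono) simp_all
  moreover have "\<bar>langevin s / s\<bar> * norm w \<le> 1 * norm w"
    by (rule mult_right_mono[OF ratio norm_ge_zero])
  ultimately show ?thesis
    using False norm_triangle_ineq[of "((langevin' s - langevin s / s) * (w \<bullet> sgn u)) *\<^sub>R sgn u"
        "(langevin s / s) *\<^sub>R w"]
    by (simp add: langevin_field_deriv_def s_def[symmetric] norm_sgn)
qed (simp add: langevin_field_deriv_def)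

lemma langevin_field_has_derivative:
  "(langevin_field c has_derivative (\<lambda>w. langevin_field_deriv (u /\<^sub>R c) (w /\<^sub>R c))) (at u)"
proof -
  have "((\<lambda>v. langevin_field 1 (v /\<^sub>R c)) has_derivative (\<lambda>w. langevin_field_deriv (u /\<^sub>R c) (w /\<^sub>R c))) (at u)"
    by (rule has_derivative_compose[OF has_derivative_scaleR_right[OF has_derivative_ident]
          langevin_field_unit_has_derivative, unfolded o_def])
  then show ?thesis
    by (simp add: langevin_field_eq_unit[of c, abs_def])
qed

lemma continuous_on_langevin_field: "continuous_on UNIV (langevin_field c :: 'a::real_inner \<Rightarrow> 'a)"
  by (intro continuous_at_imp_continuous_on ballI has_derivative_continuous[OF langevin_field_has_derivative])

lemma borel_measurable_langevin_field [measurable]: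
  "(langevin_field c :: 'a::euclidean_space \<Rightarrow> 'a) \<in> borel_measurable borel"
  by (rule borel_measurable_continuous_onI[OF continuous_on_langevin_field])

lemma integral_scaleR_left_unconditional:
  fixes c :: "'a::{real_inner, banach, second_countable_topology}"
  shows "(LINT x|M. f x *\<^sub>R c) = (LINT x|M. f x) *\<^sub>R c"
  by (rule integral_bounded_linear'[where T'="\<lambda>v. (v \<bullet> c) / (c \<bullet> c)"])
    (auto intro: bounded_linear_scaleR_left bounded_linear_compose[OF bounded_linear_divide bounded_linear_inner_left])

lemma integrable_scaleR_bounded:
  fixes g :: "'a \<Rightarrow> 'b::{banach, second_countable_topology}"
  assumes "integrable M q" "g \<in> borel_measurable M" "\<And>y. norm (g y) \<le> C"
  shows "integrable M (\<lambda>y. q y *\<^sub>R g y)"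
proof (rule Bochner_Integration.integrable_bound[of _ "\<lambda>y. C * q y"])
  show "AE y in M. norm (q y *\<^sub>R g y) \<le> norm (C * q y)"
    using order_trans[OF assms(3) abs_ge_self]
    by (intro AE_I2) (metis abs_ge_zero abs_mult mult.commute mult_left_mono norm_scaleR real_norm_def)
qed (use assms in simp_all)

lemma tendsto_difference_quotient_at_right:
  assumes "(F has_derivative F') (at u)"
  shows "((\<lambda>s. (F (u + s *\<^sub>R w) - F u) /\<^sub>R s) \<longlongrightarrow> F' w) (at_right 0)"
proof -
  have lin: "linear F'"
    by (rule has_derivative_linear[OF assms])
  have "((\<lambda>s. u + s *\<^sub>R w) has_derivative (\<lambda>s. s *\<^sub>R w)) (at 0 within {0<..})"
    by (auto intro!: derivative_eq_intros)
  from has_derivative_compose[OF this, of F F'] assms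
  have "((\<lambda>s. F (u + s *\<^sub>R w)) has_derivative (\<lambda>s. s *\<^sub>R F' w)) (at 0 within {0<..})"
    by (simp add: o_def linear.scaleR[OF lin] has_derivative_at_withinI)
  then have "((\<lambda>s. (F (u + s *\<^sub>R w) - F u - s *\<^sub>R F' w) /\<^sub>R norm s) \<longlongrightarrow> 0) (at_right 0)"
    by (simp add: has_derivative_at_within)
  moreover have "\<forall>\<^sub>F s in at_right 0. (F (u + s *\<^sub>R w) - F u - s *\<^sub>R F' w) /\<^sub>R norm s
      = (F (u + s *\<^sub>R w) - F u) /\<^sub>R s - F' w"
    by (simp add: eventually_at_right_less eventually_mono[OF eventually_at_right_less]
        scaleR_diff_right)
  ultimately have "((\<lambda>s. (F (u + s *\<^sub>R w) - F u) /\<^sub>R s - F' w) \<longlongrightarrow> 0) (at_right 0)"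
    by (rule Lim_transform_eventually)
  then show ?thesis
    by (simp add: LIM_zero_iff)
qed

lemma borel_measurable_derivative_apply:
  fixes F :: "'a::euclidean_space \<Rightarrow> 'b::euclidean_space"
  assumes F: "\<And>u. (F has_derivative F' u) (at u)"
  shows "(\<lambda>u. F' u w) \<in> borel_measurable borel"
proof (rule borel_measurable_LIMSEQ_metric)
  have "continuous_on UNIV F"
    by (intro continuous_at_imp_continuous_on ballI has_derivative_continuous[OF F])
  then have [measurable]: "F \<in> borel_measurable borel"
    by (rule borel_measurable_continuous_onI)
  let ?s = "\<lambda>i::nat. 1 / real (Suc i)"
  show "(\<lambda>u. (F (u + ?s i *\<^sub>R w) - F u) /\<^sub>R ?s i) \<in> borel_measurable borel" for i
    by measurable
  have "filterlim ?s (at_right 0) sequentially"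
    by (rule tendsto_imp_filterlim_at_right[OF LIMSEQ_Suc[OF lim_const_over_n]]) simp
  then show "(\<lambda>i. (F (u + ?s i *\<^sub>R w) - F u) /\<^sub>R ?s i) \<longlonglongrightarrow> F' u w" for u
    by (rule filterlim_compose[OF tendsto_difference_quotient_at_right[OF F]])
qed

lemma integral_dominated_convergence_at:
  fixes s :: "'c::first_countable_topology \<Rightarrow> 'a \<Rightarrow> 'b::{banach, second_countable_topology}"
  assumes "\<And>z. s z \<in> borel_measurable M" "f \<in> borel_measurable M" "integrable M w"
    and lim: "AE y in M. ((\<lambda>z. s z y) \<longlongrightarrow> f y) (at x)"
    and bound: "\<And>z. z \<noteq> x \<Longrightarrow> AE y in M. norm (s z y) \<le> w y"
  shows "((\<lambda>z. integral\<^sup>L M (s z)) \<longlongrightarrow> integral\<^sup>L M f) (at x)"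
  unfolding tendsto_at_iff_sequentially o_def
proof (intro allI impI)
  fix X assume X: "\<forall>i. X i \<in> UNIV - {x}" "X \<longlonglongrightarrow> x"
  show "(\<lambda>i. integral\<^sup>L M (s (X i))) \<longlonglongrightarrow> integral\<^sup>L M f"
  proof (rule integral_dominated_convergence[OF assms(2,1,3)])
    show "AE y in M. (\<lambda>i. s (X i) y) \<longlonglongrightarrow> f y"
      using lim by eventually_elim (use X in \<open>auto simp: tendsto_at_iff_sequentially o_def\<close>)
    show "AE y in M. norm (s (X i) y) \<le> w y" for i
      using X by (intro bound) auto
  qed
qed

lemma bounded_linear_integral_scaleR:
  fixes T :: "'a \<Rightarrow> 'c::real_normed_vector \<Rightarrow> 'b::{banach, second_countable_topology}"
  assumes lin: "\<And>y. linear (T y)" and T_le: "\<And>y w. norm (T y w) \<le> K * norm w"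
    and [measurable]: "\<And>w. (\<lambda>y. T y w) \<in> borel_measurable M" and q: "integrable M q"
  shows "bounded_linear (\<lambda>w. LINT y|M. q y *\<^sub>R T y w)"
proof (rule bounded_linear_intro)
  have int: "integrable M (\<lambda>y. q y *\<^sub>R T y w)" for w
    using T_le by (intro integrable_scaleR_bounded[OF q]) simp_all
  show "(LINT y|M. q y *\<^sub>R T y (v + w)) = (LINT y|M. q y *\<^sub>R T y v) + (LINT y|M. q y *\<^sub>R T y w)" for v w
    using int by (simp add: linear_add[OF lin] scaleR_add_right)
  show "(LINT y|M. q y *\<^sub>R T y (c *\<^sub>R v)) = c *\<^sub>R (LINT y|M. q y *\<^sub>R T y v)" for c v
  proof -
    have "q y *\<^sub>R T y (c *\<^sub>R v) = c *\<^sub>R (q y *\<^sub>R T y v)" for y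
      by (simp add: linear.scaleR[OF lin] ac_simps)
    then show ?thesis
      by (simp only: integral_scaleR_right)
  qed
  show "norm (LINT y|M. q y *\<^sub>R T y w) \<le> norm w * (K * (LINT y|M. \<bar>q y\<bar>))" for w
  proof -
    have "norm (LINT y|M. q y *\<^sub>R T y w) \<le> (LINT y|M. norm (q y *\<^sub>R T y w))"
      by (rule integral_norm_bound)
    also have "\<dots> \<le> (LINT y|M. \<bar>q y\<bar> * (K * norm w))"
      using integrable_norm[OF int[of w]] q T_le by (intro integral_mono) (auto intro!: mult_left_mono)
    finally show ?thesis
      by (simp add: ac_simps)
  qed
qed

lemma norm_derivative_remainder_le:
  fixes F :: "'a::{real_normed_vector, perfect_space} \<Rightarrow> 'b::real_normed_vector"
  assumes F: "\<And>u. (F has_derivative F' u) (at u)"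
    and F'_le: "\<And>u w. norm (F' u w) \<le> K * norm w"
  shows "norm (F a - F b - F' b (a - b)) \<le> 2 * K * norm (a - b)"
proof -
  have "norm (F a - F b) \<le> K * norm (a - b)"
    using F F'_le by (intro differentiable_bound[of UNIV]) (auto intro: onorm_le)
  then show ?thesis
    using F'_le[of b "a - b"] norm_triangle_ineq4[of "F a - F b" "F' b (a - b)"] by simp
qed

lemma tendsto_convolution_remainder:
  fixes F :: "'a::euclidean_space \<Rightarrow> 'b::euclidean_space" and q :: "'a \<Rightarrow> real"
  assumes F: "\<And>u. (F has_derivative F' u) (at u)"
    and F'_le: "\<And>u w. norm (F' u w) \<le> K * norm w"
    and q: "integrable lborel q"
  shows "((\<lambda>z. LINT y|lborel. q y *\<^sub>R ((F (z - y) - F (x - y) - F' (x - y) (z - x)) /\<^sub>R norm (z - x)))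
          \<longlongrightarrow> 0) (at x)"
proof -
  define R where "R z y = q y *\<^sub>R ((F (z - y) - F (x - y) - F' (x - y) (z - x)) /\<^sub>R norm (z - x))" for z y
  have [measurable]: "F \<in> borel_measurable borel"
    by (intro borel_measurable_continuous_onI continuous_at_imp_continuous_on ballI
        has_derivative_continuous[OF F])
  have [measurable]: "(\<lambda>u. F' u w) \<in> borel_measurable borel" for w
    by (rule borel_measurable_derivative_apply[OF F])
  have "((\<lambda>z. integral\<^sup>L lborel (R z)) \<longlongrightarrow> integral\<^sup>L lborel (\<lambda>_::'a. 0::'b)) (at x)"
  proof (rule integral_dominated_convergence_at[where w="\<lambda>y. \<bar>q y\<bar> * (2 * K)"])
    show "AE y in lborel. ((\<lambda>z. R z y) \<longlongrightarrow> 0) (at x)"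
    proof (rule AE_I2)
      fix y
      have "((\<lambda>z. F (z - y)) has_derivative F' (x - y)) (at x)"
        using has_derivative_compose[OF has_derivative_diff[OF has_derivative_ident has_derivative_const] F]
        by (simp add: o_def)
      then show "((\<lambda>z. R z y) \<longlongrightarrow> 0) (at x)"
        unfolding R_def has_derivative_at_within using tendsto_scaleR[OF tendsto_const] by fastforce
    qed
    show "AE y in lborel. norm (R z y) \<le> \<bar>q y\<bar> * (2 * K)" if "z \<noteq> x" for z
    proof (rule AE_I2)
      fix y
      have "norm (F (z - y) - F (x - y) - F' (x - y) (z - x)) / norm (z - x) \<le> 2 * K"
        using norm_derivative_remainder_le[OF F F'_le, of "z - y" "x - y"] that
        by (simp add: pos_divide_le_eq)
      then show "norm (R z y) \<le> \<bar>q y\<bar> * (2 * K)"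
        unfolding R_def norm_scaleR real_norm_def by (simp add: divide_inverse_commute mult_left_mono)
    qed
    show "R z \<in> borel_measurable lborel" for z
      using q unfolding R_def by measurable
  qed (use q in auto)
  then show ?thesis
    unfolding R_def[abs_def] by simp
qed

lemma has_derivative_convolution:
  fixes F :: "'a::euclidean_space \<Rightarrow> 'b::euclidean_space" and q :: "'a \<Rightarrow> real"
  assumes F: "\<And>u. (F has_derivative F' u) (at u)"
    and F'_le: "\<And>u w. norm (F' u w) \<le> K * norm w"
    and F_le: "\<And>u. norm (F u) \<le> B"
    and q: "integrable lborel q"
  shows "((\<lambda>x. LINT y|lborel. q y *\<^sub>R F (x - y)) has_derivative
          (\<lambda>w. LINT y|lborel. q y *\<^sub>R F' (x - y) w)) (at x)"
proof -
  define \<Phi> where "\<Phi> z = (LINT y|lborel. q y *\<^sub>R F (z - y))" for z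
  define \<Phi>' where "\<Phi>' w = (LINT y|lborel. q y *\<^sub>R F' (x - y) w)" for w
  have [measurable]: "F \<in> borel_measurable borel"
    by (intro borel_measurable_continuous_onI continuous_at_imp_continuous_on ballI
        has_derivative_continuous[OF F])
  have [measurable]: "(\<lambda>u. F' u w) \<in> borel_measurable borel" for w
    by (rule borel_measurable_derivative_apply[OF F])
  have F_int: "integrable lborel (\<lambda>y. q y *\<^sub>R F (z - y))" for z
    using F_le by (intro integrable_scaleR_bounded[OF q]) simp_all
  have F'_int: "integrable lborel (\<lambda>y. q y *\<^sub>R F' (z - y) w)" for z w
    using F'_le by (intro integrable_scaleR_bounded[OF q]) simp_all
  have "bounded_linear \<Phi>'"
    unfolding \<Phi>'_def
    by (rule bounded_linear_integral_scaleR[where T="\<lambda>y. F' (x - y)", OF has_derivative_linear[OF F] F'_le _ q])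
      measurable
  moreover have "(LINT y|lborel. q y *\<^sub>R ((F (z - y) - F (x - y) - F' (x - y) (z - x)) /\<^sub>R norm (z - x)))
      = (\<Phi> z - \<Phi> x - \<Phi>' (z - x)) /\<^sub>R norm (z - x)" for z
  proof -
    have "q y *\<^sub>R ((F (z - y) - F (x - y) - F' (x - y) (z - x)) /\<^sub>R norm (z - x))
        = inverse (norm (z - x)) *\<^sub>R (q y *\<^sub>R F (z - y) - q y *\<^sub>R F (x - y) - q y *\<^sub>R F' (x - y) (z - x))" for y
      by (simp add: algebra_simps)
    then show ?thesis
      using F_int F'_int by (simp add: \<Phi>_def \<Phi>'_def)
  qed
  ultimately show ?thesis
    using tendsto_convolution_remainder[OF F F'_le q, of x]
    unfolding \<Phi>_def[symmetric] \<Phi>'_def[symmetric] by (simp add: has_derivative_at_within)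
qed

lemma has_vector_derivative_compose:
  assumes f: "(f has_vector_derivative v) (at t)" and g: "(g has_derivative g') (at (f t))"
  shows "((\<lambda>s. g (f s)) has_vector_derivative g' v) (at t)"
proof -
  have "linear g'"
    by (rule has_derivative_linear[OF g])
  moreover have "((\<lambda>s. g (f s)) has_derivative (\<lambda>s. g' (s *\<^sub>R v))) (at t)"
    using has_derivative_compose[OF f[unfolded has_vector_derivative_def] g] by (simp add: o_def)
  ultimately show ?thesis
    by (simp add: has_vector_derivative_def linear.scaleR)
qed

lemma bounded_linear_matrix_vector_mult_left: "bounded_linear (\<lambda>A::real^'n^'m. A *v w)"
proof -
  have "linear (\<lambda>A::real^'n^'m. A *v w)"
    by (rule linearI) (simp_all add: matrix_vector_mult_add_rdistrib scaleR_matrix_vector_assoc)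
  then show ?thesis
    by (rule linear_conv_bounded_linear[THEN iffD1])
qed

lemma norm_matrix_le:
  fixes f :: "real^'n \<Rightarrow> real^'m"
  assumes "\<And>w. norm (f w) \<le> K * norm w"
  shows "norm (matrix f) \<le> real DIM(real^'n^'m) * K"
proof -
  have "norm (matrix f) \<le> (\<Sum>b\<in>Basis. \<bar>matrix f \<bullet> b\<bar>)"
    by (rule norm_le_l1)
  also have "\<dots> \<le> real DIM(real^'n^'m) * K"
  proof (rule sum_bounded_above)
    fix b :: "real^'n^'m" assume "b \<in> Basis"
    then obtain i j where b: "b = axis i (axis j 1)"
      by (auto simp: Basis_vec_def)
    have "\<bar>matrix f \<bullet> b\<bar> = \<bar>f (axis j 1) $ i\<bar>"
      by (simp add: b inner_axis matrix_def)
    also have "\<dots> \<le> K"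
      using component_le_norm_cart[of "f (axis j 1)" i] assms[of "axis j 1"] by simp
    finally show "\<bar>matrix f \<bullet> b\<bar> \<le> K" .
  qed
  finally show ?thesis .
qed

lemma borel_measurable_matrix:
  fixes f :: "'a \<Rightarrow> real^'n \<Rightarrow> real^'m"
  assumes "\<And>w. (\<lambda>u. f u w) \<in> borel_measurable M"
  shows "(\<lambda>u. matrix (f u)) \<in> borel_measurable M"
  unfolding borel_measurable_euclidean_space[where 'c="real^'n^'m"]
proof
  fix b :: "real^'n^'m" assume "b \<in> Basis"
  then obtain i j where b: "b = axis i (axis j 1)"
    by (auto simp: Basis_vec_def)
  have "(\<lambda>u. f u (axis j 1) \<bullet> axis i 1) \<in> borel_measurable M"
    using assms by measurable
  then show "(\<lambda>u. matrix (f u) \<bullet> b) \<in> borel_measurable M"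
    by (simp add: b inner_axis matrix_def)
qed

lemma integral_jacobian_translate_mult_vector:
  fixes F :: "real^'n \<Rightarrow> real^'m"
  assumes F: "\<And>u. (F has_derivative F' u) (at u)"
    and F'_le: "\<And>u w. norm (F' u w) \<le> K * norm w"
    and q: "integrable lborel q"
  shows "(LINT y|lborel. q y *\<^sub>R matrix (frechet_derivative (\<lambda>x. F (x - y)) (at r))) *v w
       = (LINT y|lborel. q y *\<^sub>R F' (r - y) w)"
proof -
  have "((\<lambda>x. F (x - y)) has_derivative F' (r - y)) (at r)" for y
    using has_derivative_compose[OF has_derivative_diff[OF has_derivative_ident has_derivative_const] F]
    by (simp add: o_def)
  then have jacobian: "frechet_derivative (\<lambda>x. F (x - y)) (at r) = F' (r - y)" for y
    by (simp add: frechet_derivative_at[symmetric])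
  have lin: "linear (F' u)" for u
    by (rule has_derivative_linear[OF F])
  have [measurable]: "(\<lambda>u. matrix (F' u)) \<in> borel_measurable borel"
    by (intro borel_measurable_matrix borel_measurable_derivative_apply[OF F])
  have "integrable lborel (\<lambda>y. q y *\<^sub>R matrix (F' (r - y)))"
    using norm_matrix_le[OF F'_le] by (intro integrable_scaleR_bounded[OF q]) simp_all
  then have "(LINT y|lborel. q y *\<^sub>R matrix (F' (r - y))) *v w
      = (LINT y|lborel. (q y *\<^sub>R matrix (F' (r - y))) *v w)"
    by (rule integral_bounded_linear[OF bounded_linear_matrix_vector_mult_left, symmetric])
  then show ?thesis
    by (simp add: jacobian scaleR_matrix_vector_assoc[symmetric] fun_cong[OF matrix_vector_mul(2)[OF lin]])
qed

lemma lborel_distr_orthogonal_transformation: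
  fixes f :: "real^'n::{finite,wellorder} \<Rightarrow> real^'n::_"
  assumes f: "orthogonal_transformation f"
  shows "distr lborel borel f = lborel"
proof (rule lborel_eqI[symmetric])
  have lin: "linear f"
    using f by (rule orthogonal_transformation_linear)
  then have [measurable]: "f \<in> borel_measurable borel"
    by (intro borel_measurable_continuous_onI linear_continuous_on linear_conv_bounded_linear[THEN iffD1])
  fix l u :: "real^'n::_" assume lu: "\<And>b. b \<in> Basis \<Longrightarrow> l \<bullet> b \<le> u \<bullet> b"
  have "bij f"
    using f by (rule orthogonal_transformation_bij)
  then have preimage: "f -` box l u = inv f ` box l u"
    by (simp add: bij_vimage_eq_inv_image)
  have inv_f: "orthogonal_transformation (inv f)"
    using f by (rule orthogonal_transformation_inv)
  have box: "box l u \<in> lmeasurable"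
    by simp
  have image: "inv f ` box l u \<in> lmeasurable"
    using inv_f box by (rule measurable_orthogonal_image)
  have "f -` box l u \<in> sets lborel"
    using measurable_sets[of f borel borel "box l u"] by simp
  then have "emeasure (distr lborel borel f) (box l u) = emeasure lebesgue (inv f ` box l u)"
    by (simp add: emeasure_distr flip: preimage)
  also have "\<dots> = measure lebesgue (inv f ` box l u)"
    using image by (simp add: emeasure_eq_measure2)
  also have "\<dots> = measure lebesgue (box l u)"
    using measure_orthogonal_image[OF inv_f box] by simp
  also have "\<dots> = emeasure lborel (box l u)"
    using box by (simp add: emeasure_eq_measure2)
  finally show "emeasure (distr lborel borel f) (box l u) = (\<Prod>b\<in>Basis. (u - l) \<bullet> b)"
    using lu by simp
qed simp

lemma prod_Basis_cart: "(\<Prod>b\<in>(Basis :: (real^'n) set). f b) = (\<Prod>i\<in>UNIV. f (axis i 1))"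
  by (simp add: Basis_vec_def UNION_singleton_eq_range prod.reindex axis_eq_axis inj_on_def)

lemma prod_2: "prod f (UNIV::2 set) = f 1 * f 2"
  unfolding UNIV_2 by simp

lemma prod_3: "prod f (UNIV::3 set) = f 1 * f 2 * f 3"
  unfolding UNIV_3 by (simp add: ac_simps)

lemma lborel_distr_split_first_coordinate:
  "distr lborel borel (\<lambda>(y::real^2, t::real). vector [t, y$1, y$2] :: real^3) = lborel"
  (is "distr _ _ ?S = _")
proof (rule lborel_eqI[symmetric])
  have [measurable]: "?S \<in> borel_measurable borel"
    by (intro borel_measurable_continuous_onI linear_continuous_on linear_conv_bounded_linear[THEN iffD1])
      (rule linearI; auto simp: vec_eq_iff forall_3)
  fix l u :: "real^3" assume lu_Basis: "\<And>b. b \<in> Basis \<Longrightarrow> l \<bullet> b \<le> u \<bullet> b"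
  have lu: "l $ i \<le> u $ i" for i
    using lu_Basis[of "axis i 1"] by (simp add: cart_eq_inner_axis)
  define a b :: "real^2" where "a = vector [l$2, l$3]" and "b = vector [u$2, u$3]"
  have "a $ i \<le> b $ i" for i
    using exhaust_2[of i] lu by (auto simp: a_def b_def)
  then have ab: "a \<bullet> c \<le> b \<bullet> c" if "c \<in> Basis" for c
    using that by (auto simp: Basis_vec_def inner_axis)
  have "?S -` box l u = box a b \<times> {l$1<..<u$1}"
    by (auto simp: mem_box_cart forall_3 forall_2 a_def b_def)
  then have "emeasure (distr lborel borel ?S) (box l u) = emeasure (lborel \<Otimes>\<^sub>M lborel) (box a b \<times> {l$1<..<u$1})"
    by (simp add: emeasure_distr lborel_prod)
  also have "\<dots> = emeasure lborel (box a b) * emeasure lborel {l$1<..<u$1}"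
    by (rule lborel.emeasure_pair_measure_Times) auto
  also have "\<dots> = ennreal ((u$2 - l$2) * (u$3 - l$3)) * ennreal (u$1 - l$1)"
    using ab lu by (simp add: prod_Basis_cart prod_2 inner_axis a_def b_def)
  also have "\<dots> = (\<Prod>b\<in>Basis. (u - l) \<bullet> b)"
    using lu by (simp add: prod_Basis_cart prod_3 inner_axis ennreal_mult'[symmetric] ac_simps)
  finally show "emeasure (distr lborel borel ?S) (box l u) = (\<Prod>b\<in>Basis. (u - l) \<bullet> b)" .
qed simp

lemma frame_inner [simp]:
  "e_theta \<theta> \<bullet> e_theta \<theta> = 1" "e_theta_perp \<theta> \<bullet> e_theta_perp \<theta> = 1" "e_z \<bullet> e_z = 1"
  "e_theta \<theta> \<bullet> e_theta_perp \<theta> = 0" "e_theta_perp \<theta> \<bullet> e_theta \<theta> = 0"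
  "e_theta \<theta> \<bullet> e_z = 0" "e_z \<bullet> e_theta \<theta> = 0"
  "e_theta_perp \<theta> \<bullet> e_z = 0" "e_z \<bullet> e_theta_perp \<theta> = 0"
  by (simp_all add: e_theta_def e_theta_perp_def e_z_def inner_vec_def sum_3 power2_eq_square[symmetric])

definition rotated_frame :: "real \<Rightarrow> real^3 \<Rightarrow> real^3" where
  "rotated_frame \<theta> v = (v$1) *\<^sub>R e_theta \<theta> + (v$2) *\<^sub>R e_theta_perp \<theta> + (v$3) *\<^sub>R e_z"

lemma orthogonal_transformation_rotated_frame: "orthogonal_transformation (rotated_frame \<theta>)"
  unfolding orthogonal_transformation_def
proof
  show "linear (rotated_frame \<theta>)"
    by (rule linearI) (simp_all add: rotated_frame_def algebra_simps)
  have "rotated_frame \<theta> v \<bullet> rotated_frame \<theta> w = v$1 * w$1 + v$2 * w$2 + v$3 * w$3" for v w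
    by (simp add: rotated_frame_def inner_add_left inner_add_right)
  then show "\<forall>v w. rotated_frame \<theta> v \<bullet> rotated_frame \<theta> w = v \<bullet> w"
    by (simp add: inner_vec_def sum_3)
qed

definition rotated_coords :: "real \<Rightarrow> (real^2) \<times> real \<Rightarrow> real^3" where
  "rotated_coords \<theta> = (\<lambda>(y, \<eta>). \<eta> *\<^sub>R e_theta \<theta> + (y$1) *\<^sub>R e_theta_perp \<theta> + (y$2) *\<^sub>R e_z)"

lemma lborel_distr_rotated_coords: "distr lborel borel (rotated_coords \<theta>) = lborel"
proof -
  let ?S = "\<lambda>(y::real^2, t::real). vector [t, y$1, y$2] :: real^3"
  have [measurable]: "rotated_frame \<theta> \<in> borel_measurable borel"
    using orthogonal_transformation_linear[OF orthogonal_transformation_rotated_frame]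
    by (intro borel_measurable_continuous_onI linear_continuous_on linear_conv_bounded_linear[THEN iffD1])
  have [measurable]: "?S \<in> borel_measurable borel"
    by (intro borel_measurable_continuous_onI linear_continuous_on linear_conv_bounded_linear[THEN iffD1])
      (rule linearI; auto simp: vec_eq_iff forall_3)
  have "rotated_coords \<theta> = rotated_frame \<theta> \<circ> ?S"
    by (auto simp: fun_eq_iff rotated_coords_def rotated_frame_def)
  then have "distr lborel borel (rotated_coords \<theta>) = distr (distr lborel borel ?S) borel (rotated_frame \<theta>)"
    by (simp add: distr_distr)
  then show ?thesis
    by (simp add: lborel_distr_split_first_coordinate
        lborel_distr_orthogonal_transformation[OF orthogonal_transformation_rotated_frame])
qed

lemma
  fixes k :: "real^3 \<Rightarrow> 'b::{banach, second_countable_topology}"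
  assumes k: "integrable lborel k"
  shows integrable_rotated_coords: "integrable lborel (\<lambda>y. LINT \<eta>|lborel. k (rotated_coords \<theta> (y, \<eta>)))"
    and integral_rotated_coords:
      "(LINT x|lborel. k x) = (LINT y|lborel. LINT \<eta>|lborel. k (rotated_coords \<theta> (y, \<eta>)))"
proof -
  have [measurable]: "k \<in> borel_measurable borel"
    using k by auto
  have "continuous_on UNIV (rotated_coords \<theta>)"
    unfolding rotated_coords_def case_prod_unfold by (intro continuous_intros)
  then have [measurable]: "rotated_coords \<theta> \<in> borel_measurable borel"
    by (rule borel_measurable_continuous_onI)
  have "integrable (distr lborel borel (rotated_coords \<theta>)) k"
    using k by (simp add: lborel_distr_rotated_coords)
  then have int: "integrable (lborel \<Otimes>\<^sub>M lborel) (\<lambda>z. k (rotated_coords \<theta> z))"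
    by (simp add: integrable_distr_eq lborel_prod)
  then show "integrable lborel (\<lambda>y. LINT \<eta>|lborel. k (rotated_coords \<theta> (y, \<eta>)))"
    by (rule lborel_pair.integrable_fst')
  have "(LINT x|lborel. k x) = integral\<^sup>L (lborel \<Otimes>\<^sub>M lborel) (\<lambda>z. k (rotated_coords \<theta> z))"
    using integral_distr[of "rotated_coords \<theta>" lborel borel k]
    by (simp add: lborel_distr_rotated_coords lborel_prod)
  also have "\<dots> = (LINT y|lborel. LINT \<eta>|lborel. k (rotated_coords \<theta> (y, \<eta>)))"
    using lborel_pair.integral_fst'[OF int] by simp
  finally show "(LINT x|lborel. k x) = (LINT y|lborel. LINT \<eta>|lborel. k (rotated_coords \<theta> (y, \<eta>)))" .
qed

lemma E_rot_embed_plane: "E_rot \<theta> *v embed_plane w = (w$1) *\<^sub>R e_theta_perp \<theta> - (w$2) *\<^sub>R e_z"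
  by (simp add: vec_eq_iff forall_3 E_rot_def embed_plane_def matrix_vector_mult_def sum_3
      e_theta_perp_def e_z_def)

lemma bounded_linear_E_rot_embed_plane: "bounded_linear (\<lambda>w. E_rot \<theta> *v embed_plane w)"
proof -
  have "linear (\<lambda>w. E_rot \<theta> *v embed_plane w)"
    by (rule linearI) (simp_all add: E_rot_embed_plane algebra_simps)
  then show ?thesis
    by (rule linear_conv_bounded_linear[THEN iffD1])
qed

lemma norm_E_rot_embed_plane: "norm (E_rot \<theta> *v embed_plane w) = norm w"
proof -
  have "(E_rot \<theta> *v embed_plane w) \<bullet> (E_rot \<theta> *v embed_plane w) = w$1 * w$1 + w$2 * w$2"
    by (simp add: E_rot_embed_plane inner_diff_left inner_diff_right)
  also have "\<dots> = w \<bullet> w"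
    by (simp add: inner_vec_def sum_2)
  finally show ?thesis
    by (simp add: norm_eq_sqrt_inner)
qed

lemma H_ffl_rotated_coords:
  assumes "G \<noteq> 0"
  shows "H_ffl \<theta> A1 A2 \<Lambda>1 \<Lambda>2 G (rotated_coords \<theta> (y, \<eta>)) t
       = G *\<^sub>R (E_rot \<theta> *v embed_plane (ffl_traj A1 A2 \<Lambda>1 \<Lambda>2 G t - y))"
  using assms
  by (simp add: H_ffl_def rotated_coords_def E_rot_embed_plane ffl_traj_def inner_add_left algebra_simps)

lemma integrable_xray: "integrable lborel \<rho> \<Longrightarrow> integrable lborel (xray \<theta> \<rho>)"
  using integrable_rotated_coords[of \<rho> \<theta>] by (simp add: xray_def[abs_def] rotated_coords_def)

lemma magn_integral_eq_convolution:
  assumes \<rho>: "integrable lborel \<rho>" and G: "G \<noteq> 0"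
  shows "magn_integral \<rho> \<theta> A1 A2 \<Lambda>1 \<Lambda>2 G Hsat t = E_rot \<theta> *v embed_plane
    (LINT y|lborel. xray \<theta> \<rho> y *\<^sub>R langevin_field (Hsat / G) (ffl_traj A1 A2 \<Lambda>1 \<Lambda>2 G t - y))"
proof -
  let ?E = "\<lambda>w. E_rot \<theta> *v embed_plane w"
  let ?F = "\<lambda>y. langevin_field (Hsat / G) (ffl_traj A1 A2 \<Lambda>1 \<Lambda>2 G t - y)"
  have [measurable]: "\<rho> \<in> borel_measurable borel"
    using \<rho> by auto
  have "continuous_on UNIV (\<lambda>x. H_ffl \<theta> A1 A2 \<Lambda>1 \<Lambda>2 G x t)"
    unfolding H_ffl_def by (intro continuous_intros)
  then have [measurable]: "(\<lambda>x. H_ffl \<theta> A1 A2 \<Lambda>1 \<Lambda>2 G x t) \<in> borel_measurable borel"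
    by (rule borel_measurable_continuous_onI)
  have field: "langevin_field Hsat (H_ffl \<theta> A1 A2 \<Lambda>1 \<Lambda>2 G (rotated_coords \<theta> (y, \<eta>)) t) = ?E (?F y)"
    for y \<eta>
    using G langevin_field_isometry[OF bounded_linear.linear[OF bounded_linear_E_rot_embed_plane]
        norm_E_rot_embed_plane]
    by (simp add: H_ffl_rotated_coords langevin_field_scaleR)
  have "integrable lborel (\<lambda>x. \<rho> x *\<^sub>R langevin_field Hsat (H_ffl \<theta> A1 A2 \<Lambda>1 \<Lambda>2 G x t))"
    by (rule integrable_scaleR_bounded[OF \<rho> _ norm_langevin_field_le]) measurable
  then have "magn_integral \<rho> \<theta> A1 A2 \<Lambda>1 \<Lambda>2 G Hsat t = (LINT y|lborel. LINT \<eta>|lborel.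
      \<rho> (rotated_coords \<theta> (y, \<eta>)) *\<^sub>R
        langevin_field Hsat (H_ffl \<theta> A1 A2 \<Lambda>1 \<Lambda>2 G (rotated_coords \<theta> (y, \<eta>)) t))"
    unfolding magn_integral_def by (rule integral_rotated_coords)
  also have "\<dots> = (LINT y|lborel. xray \<theta> \<rho> y *\<^sub>R ?E (?F y))"
    unfolding field by (simp add: integral_scaleR_left_unconditional xray_def rotated_coords_def)
  also have "\<dots> = (LINT y|lborel. ?E (xray \<theta> \<rho> y *\<^sub>R ?F y))"
    by (simp add: linear.scaleR[OF bounded_linear.linear[OF bounded_linear_E_rot_embed_plane]])
  also have "\<dots> = ?E (LINT y|lborel. xray \<theta> \<rho> y *\<^sub>R ?F y)"
    by (intro integral_bounded_linear bounded_linear_E_rot_embed_plane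
        integrable_scaleR_bounded[OF integrable_xray[OF \<rho>] _ norm_langevin_field_le]) measurable
  finally show ?thesis .
qed

lemma sinusoidal_differentiable:
  assumes "sinusoidal f"
  shows "f differentiable (at t)"
proof -
  obtain \<omega> \<phi> where "f = (\<lambda>t. sin (\<omega> * t + \<phi>))"
    using assms by (auto simp: sinusoidal_def)
  then show ?thesis
    by (auto intro!: derivative_eq_intros simp: differentiable_def)
qed

lemma ffl_traj_differentiable:
  assumes "\<Lambda>1 differentiable (at t)" "\<Lambda>2 differentiable (at t)"
  shows "ffl_traj A1 A2 \<Lambda>1 \<Lambda>2 G differentiable (at t)"
proof -
  have "ffl_traj A1 A2 \<Lambda>1 \<Lambda>2 G = (\<lambda>\<tau>. (A1 / G * \<Lambda>1 \<tau>) *\<^sub>R axis 1 1 + (A2 / G * \<Lambda>2 \<tau>) *\<^sub>R axis 2 1)"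
    by (simp add: fun_eq_iff vec_eq_iff forall_2 ffl_traj_def axis_def)
  then show ?thesis
    by (simp only:) (intro differentiable_add differentiable_scaleR differentiable_mult
        differentiable_const assms)
qed

lemma magn_integral_has_vector_derivative:
  assumes \<rho>: "integrable lborel \<rho>" and G: "G \<noteq> 0"
    and traj: "ffl_traj A1 A2 \<Lambda>1 \<Lambda>2 G differentiable (at t)"
  shows "(magn_integral \<rho> \<theta> A1 A2 \<Lambda>1 \<Lambda>2 G Hsat has_vector_derivative
      E_rot \<theta> *v embed_plane (core_op (Hsat / G) (xray \<theta> \<rho>) (ffl_traj A1 A2 \<Lambda>1 \<Lambda>2 G t)
        *v vector_derivative (ffl_traj A1 A2 \<Lambda>1 \<Lambda>2 G) (at t))) (at t)"
proof -
  define h where "h = Hsat / G"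
  define r where "r = ffl_traj A1 A2 \<Lambda>1 \<Lambda>2 G"
  define q where "q = xray \<theta> \<rho>"
  note F = langevin_field_has_derivative[of h]
  have F'_le: "norm (langevin_field_deriv (u /\<^sub>R h) (w /\<^sub>R h)) \<le> 3 / \<bar>h\<bar> * norm w" for u w :: "real^2"
    using norm_langevin_field_deriv_le[of "u /\<^sub>R h" "w /\<^sub>R h"] by (simp add: divide_inverse_commute)
  have q: "integrable lborel q"
    unfolding q_def using \<rho> by (rule integrable_xray)
  have "((\<lambda>x. LINT y|lborel. q y *\<^sub>R langevin_field h (x - y)) has_derivative
      (\<lambda>w. LINT y|lborel. q y *\<^sub>R langevin_field_deriv ((r t - y) /\<^sub>R h) (w /\<^sub>R h))) (at (r t))"
    by (rule has_derivative_convolution[OF F F'_le norm_langevin_field_le q])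
  moreover have "(\<lambda>w. LINT y|lborel. q y *\<^sub>R langevin_field_deriv ((r t - y) /\<^sub>R h) (w /\<^sub>R h))
      = (\<lambda>w. core_op h q (r t) *v w)"
    unfolding core_op_def by (simp add: integral_jacobian_translate_mult_vector[OF F F'_le q])
  moreover have "(r has_vector_derivative vector_derivative r (at t)) (at t)"
    using traj by (simp add: r_def vector_derivative_works)
  ultimately have "((\<lambda>\<tau>. LINT y|lborel. q y *\<^sub>R langevin_field h (r \<tau> - y)) has_vector_derivative
      core_op h q (r t) *v vector_derivative r (at t)) (at t)"
    using has_vector_derivative_compose by fastforce
  moreover have "magn_integral \<rho> \<theta> A1 A2 \<Lambda>1 \<Lambda>2 G Hsat
      = (\<lambda>\<tau>. E_rot \<theta> *v embed_plane (LINT y|lborel. q y *\<^sub>R langevin_field h (r \<tau> - y)))"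
    using magn_integral_eq_convolution[OF \<rho> G] by (simp add: h_def q_def r_def fun_eq_iff)
  ultimately show ?thesis
    unfolding h_def q_def r_def by (simp add: bounded_linear.has_vector_derivative[OF bounded_linear_E_rot_embed_plane])
qed

theorem theorem3p2:
  fixes \<Omega> :: "(real^3) set" and \<rho> :: "real^3 \<Rightarrow> real"
    and P :: "real^3^3" and \<theta> G A1 A2 \<mu>0 m Hsat :: real
    and \<Lambda>1 \<Lambda>2 :: "real \<Rightarrow> real"
  assumes "\<Omega> \<noteq> {}" and "open \<Omega>" and "convex \<Omega>"
    and "\<rho> \<in> borel_measurable lborel"
    and "integrable lborel (\<lambda>x. (\<rho> x)\<^sup>2)"
    and "integrable lborel \<rho>"
    and "\<And>x. \<rho> x \<ge> 0"
    and "\<And>x. x \<notin> \<Omega> \<Longrightarrow> \<rho> x = 0"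
    and "0 \<le> \<theta>" and "\<theta> < pi"
    and "G \<noteq> 0"
    and "sinusoidal \<Lambda>1" and "sinusoidal \<Lambda>2"
    and "\<mu>0 > 0" and "m > 0" and "Hsat > 0"
  shows "\<forall>t. \<exists>D. ((\<lambda>\<tau>. magn_integral \<rho> \<theta> A1 A2 \<Lambda>1 \<Lambda>2 G Hsat \<tau>) has_vector_derivative D) (at t)
            \<and> - (\<mu>0 * m) *\<^sub>R (P *v D)
              = - (\<mu>0 * m) *\<^sub>R (P *v (E_rot \<theta> *v embed_plane
                  (core_op (Hsat / G) (xray \<theta> \<rho>) (ffl_traj A1 A2 \<Lambda>1 \<Lambda>2 G t)
                    *v vector_derivative (ffl_traj A1 A2 \<Lambda>1 \<Lambda>2 G) (at t))))"
proof -
  have traj: "ffl_traj A1 A2 \<Lambda>1 \<Lambda>2 G differentiable (at t)" for t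
    using assms(12,13) by (intro ffl_traj_differentiable sinusoidal_differentiable)
  show ?thesis
    using magn_integral_has_vector_derivative[OF assms(6,11) traj] by blast
qed

end
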